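(* Let $g\in\mathscr T'$ and $\Psi,\Phi\in\mathcal F_{\rm fin}(\mathscr T)$. Then for every net $(g_\alpha)$ in $\mathfrak h$ with $\langle g_\alpha,f\rangle\to\langle g,f\rangle$ for all $f\in\mathscr T$, $$\langle\Psi,\Phi\rangle_g=\lim_\alpha\frac{\langle e^{a^\dagger(g_\alpha)}\Psi,e^{a^\dagger(g_\alpha)}\Phi\rangle_{\mathcal F(\mathfrak h)}}{\langle e^{a^\dagger(g_\alpha)}\Omega,e^{a^\dagger(g_\alpha)}\Omega\rangle_{\mathcal F(\mathfrak h)}}.$$
   Context: Let $\mathfrak h$ be a complex Hilbert space (inner products antilinear in the first argument), $\mathscr T$ a topological vector space continuously embedded in $\mathfrak h$ with dense image, $\mathscr T'$ the space of continuous antilinear functionals on $\mathscr T$; write $\langle\varphi,f\rangle:=\overline{\varphi(f)}$ for $\varphi\in\mathscr T'$, $f\in\mathscr T$ (equal to $\langle\varphi,f\rangle_{\mathfrak h}$ if $\varphi\in\mathfrak h$). $\mathcal F(\mathfrak h)$ is the symmetric Fock space with vacuum $\Omega$; $\mathcal F_{\rm fin}(\mathscr T)$ the vectors with finitely many nonzero components, the $n$-th in the algebraic symmetric tensor product of $n$ copies of $\mathscr T$. For $h\in\mathfrak h$, $a^\dagger(h)$ is the usual creation operator and $e^{a^\dagger(h)}:=\sum_k a^\dagger(h)^k/k!$ (convergent in Fock norm on finite-particle vectors). For $g\in\mathscr T'$, $a(g)$ on $\mathcal F_{\rm fin}(\mathscr T)$ is defined linearly by $(a(g)\Psi)_n=\frac{\sqrt{n+1}}{(n+1)!}\sum_{\sigma\in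 S_{n+1}}\langle g,\psi_{\sigma(1)}\rangle\psi_{\sigma(2)}\otimes\cdots\otimes\psi_{\sigma(n+1)}$ for $\Psi_{n+1}=\psi_1\otimes_s\cdots\otimes_s\psi_{n+1}$; $e^{a(g)}=\sum_k a(g)^k/k!$ (finite sum), and $\langle\Psi,\Phi\rangle_g:=\langle e^{a(g)}\Psi,e^{a(g)}\Phi\rangle_{\mathcal F(\mathfrak h)}$. *)

theory Defs
  imports "HOL-Analysis.Analysis" "HOL-Library.Multiset"
begin

text \<open>A complex Hilbert space is modelled as an additive group 'h together with a
complex scalar multiplication scal and an inner product ip, antilinear in the
first and linear in the second argument, complete for the induced norm.\<close>

definition hnorm :: "('h \<Rightarrow> 'h \<Rightarrow> complex) \<Rightarrow> 'h \<Rightarrow> real" where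
  "hnorm ip x = sqrt (Re (ip x x))"

definition complex_hilbert_space ::
  "(complex \<Rightarrow> 'h::ab_group_add \<Rightarrow> 'h) \<Rightarrow> ('h \<Rightarrow> 'h \<Rightarrow> complex) \<Rightarrow> bool" where
  "complex_hilbert_space scal ip \<longleftrightarrow>
     (\<forall>x. scal 1 x = x) \<and>
     (\<forall>a b x. scal a (scal b x) = scal (a * b) x) \<and>
     (\<forall>a b x. scal (a + b) x = scal a x + scal b x) \<and>
     (\<forall>a x y. scal a (x + y) = scal a x + scal a y) \<and>
     (\<forall>x y z. ip x (y + z) = ip x y + ip x z) \<and>
     (\<forall>a x y. ip x (scal a y) = a * ip x y) \<and>
     (\<forall>x y. ip y x = cnj (ip x y)) \<and>
     (\<forall>x. 0 \<le> Re (ip x x)) \<and>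
     (\<forall>x. ip x x = 0 \<longleftrightarrow> x = 0) \<and>
     (\<forall>X :: nat \<Rightarrow> 'h.
        (\<forall>e>0. \<exists>N. \<forall>m\<ge>N. \<forall>n\<ge>N. hnorm ip (X m - X n) < e) \<longrightarrow>
        (\<exists>L. (\<lambda>n. hnorm ip (X n - L)) \<longlonglongrightarrow> 0))"

definition dense_cont_embedded ::
  "(complex \<Rightarrow> 'h::ab_group_add \<Rightarrow> 'h) \<Rightarrow> ('h \<Rightarrow> 'h \<Rightarrow> complex) \<Rightarrow> 'h set \<Rightarrow> 'h topology \<Rightarrow> bool" where
  "dense_cont_embedded scal ip T tau \<longleftrightarrow>
     topspace tau = T \<and>
     0 \<in> T \<and> (\<forall>s\<in>T. \<forall>t\<in>T. s + t \<in> T) \<and> (\<forall>a. \<forall>t\<in>T. scal a t \<in> T) \<and>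
     continuous_map (prod_topology tau tau) tau (\<lambda>(s, t). s + t) \<and>
     continuous_map (prod_topology (euclidean :: complex topology) tau) tau (\<lambda>(a, t). scal a t) \<and>
     (\<forall>t\<in>T. \<forall>e>0. \<exists>U. openin tau U \<and> t \<in> U \<and> (\<forall>s\<in>U. hnorm ip (s - t) < e)) \<and>
     (\<forall>x. \<forall>e>0. \<exists>t\<in>T. hnorm ip (x - t) < e)"

text \<open>T': continuous antilinear functionals on T.  For g in T', the pairing
<g,f> is cnj (g f).\<close>

definition antidual ::
  "(complex \<Rightarrow> 'h::ab_group_add \<Rightarrow> 'h) \<Rightarrow> 'h set \<Rightarrow> 'h topology \<Rightarrow> ('h \<Rightarrow> complex) set" where
  "antidual scal T tau =
     {g. (\<forall>s\<in>T. \<forall>t\<in>T. g (s + t) = g s + g t) \<and>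
         (\<forall>a. \<forall>t\<in>T. g (scal a t) = cnj a * g t) \<and>
         continuous_map tau (euclidean :: complex topology) g}"

definition pair :: "('h \<Rightarrow> complex) \<Rightarrow> 'h \<Rightarrow> complex" where
  "pair g f = cnj (g f)"

text \<open>A finite-particle vector is represented by a finite multiset of terms (c, [x1,...,xn]),
standing for the sum of the vectors c * (x1 (x)s ... (x)s xn), where
x1 (x)s ... (x)s xn = (1/n!) * sum over sigma of x_sigma(1) (x) ... (x) x_sigma(n).
The term (c, []) stands for c * Omega.\<close>

type_synonym 'h fvec = "(complex \<times> 'h list) multiset"

definition vac :: "'h fvec" where
  "vac = {#(1, [])#}"

definition in_Ffin :: "'h set \<Rightarrow> 'h fvec \<Rightarrow> bool" where
  "in_Ffin T \<Psi> \<longleftrightarrow> (\<forall>t\<in>#\<Psi>. set (snd t) \<subseteq> T)"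

text \<open>Inner product of two symmetric products, obtained by expanding the symmetrisations
and using the product inner product on elementary tensors.\<close>

definition sym_ip :: "('h \<Rightarrow> 'h \<Rightarrow> complex) \<Rightarrow> 'h list \<Rightarrow> 'h list \<Rightarrow> complex" where
  "sym_ip ip xs ys =
     (if length xs = length ys then
        (let n = length xs in
          (1 / of_nat (fact n))^2 *
          (\<Sum>\<sigma>\<in>{\<sigma>. \<sigma> permutes {..<n}}. \<Sum>\<tau>\<in>{\<tau>. \<tau> permutes {..<n}}.
             \<Prod>i<n. ip (xs ! \<sigma> i) (ys ! \<tau> i)))
      else 0)"

definition fin_ip :: "('h \<Rightarrow> 'h \<Rightarrow> complex) \<Rightarrow> 'h fvec \<Rightarrow> 'h fvec \<Rightarrow> complex" where
  "fin_ip ip \<Psi> \<Phi> =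
     (\<Sum>t\<in>#\<Psi>. \<Sum>u\<in>#\<Phi>. cnj (fst t) * fst u * sym_ip ip (snd t) (snd u))"

definition scaleF :: "complex \<Rightarrow> 'h fvec \<Rightarrow> 'h fvec" where
  "scaleF a \<Psi> = image_mset (\<lambda>(c, xs). (a * c, xs)) \<Psi>"

definition compF :: "nat \<Rightarrow> 'h fvec \<Rightarrow> 'h fvec" where
  "compF n \<Psi> = filter_mset (\<lambda>(c, xs). length xs = n) \<Psi>"

definition cre :: "'h \<Rightarrow> 'h fvec \<Rightarrow> 'h fvec" where
  "cre h \<Psi> = image_mset (\<lambda>(c, xs). (complex_of_real (sqrt (real (length xs + 1))) * c, h # xs)) \<Psi>"

text \<open>Annihilation by g in T' on the term c * (psi_1 (x)s ... (x)s psi_(n+1)), as in the paper: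
sqrt(n+1)/(n+1)! * sum over sigma of <g, psi_sigma(1)> psi_sigma(2) (x) ... (x) psi_sigma(n+1).
(Indices are 0-based below; the vacuum component is annihilated.)\<close>

definition ann_term :: "('h \<Rightarrow> complex) \<Rightarrow> complex \<times> 'h list \<Rightarrow> 'h fvec" where
  "ann_term g t =
     (let c = fst t; xs = snd t; m = length xs in
      if m = 0 then {#}
      else image_mset
             (\<lambda>\<sigma>. (c * complex_of_real (sqrt (real m) / real (fact m)) * pair g (xs ! \<sigma> 0),
                   map (\<lambda>i. xs ! \<sigma> i) [1..<m]))
             (mset_set {\<sigma>. \<sigma> permutes {..<m}}))"

definition ann :: "('h \<Rightarrow> complex) \<Rightarrow> 'h fvec \<Rightarrow> 'h fvec" where
  "ann g \<Psi> = (\<Sum>t\<in>#\<Psi>. ann_term g t)"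

definition max_len :: "'h fvec \<Rightarrow> nat" where
  "max_len \<Psi> = Max (insert 0 ((\<lambda>t. length (snd t)) ` set_mset \<Psi>))"

text \<open>e^{a(g)} Psi = sum_k a(g)^k Psi / k! (a finite sum: a(g)^k Psi = 0 for k > max_len Psi).\<close>

definition exp_ann :: "('h \<Rightarrow> complex) \<Rightarrow> 'h fvec \<Rightarrow> 'h fvec" where
  "exp_ann g \<Psi> = (\<Sum>k\<le>max_len \<Psi>. scaleF (1 / of_nat (fact k)) ((ann g ^^ k) \<Psi>))"

definition g_ip :: "('h \<Rightarrow> 'h \<Rightarrow> complex) \<Rightarrow> ('h \<Rightarrow> complex) \<Rightarrow> 'h fvec \<Rightarrow> 'h fvec \<Rightarrow> complex" where
  "g_ip ip g \<Psi> \<Phi> = fin_ip ip (exp_ann g \<Psi>) (exp_ann g \<Phi>)"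

text \<open>n-particle component of e^{a^dagger(h)} Psi = sum_k a^dagger(h)^k Psi / k!:
it is sum over k <= n of a^dagger(h)^k Psi_(n-k) / k!.\<close>

definition exp_cre_comp :: "'h \<Rightarrow> nat \<Rightarrow> 'h fvec \<Rightarrow> 'h fvec" where
  "exp_cre_comp h n \<Psi> = (\<Sum>k\<le>n. scaleF (1 / of_nat (fact k)) ((cre h ^^ k) (compF (n - k) \<Psi>)))"

text \<open>Fock-space inner product < e^{a^dagger(h)} Psi, e^{a^dagger(h)} Phi >, computed as
the sum over n of the inner products of the n-particle components.\<close>

definition exp_cre_ip :: "('h \<Rightarrow> 'h \<Rightarrow> complex) \<Rightarrow> 'h \<Rightarrow> 'h fvec \<Rightarrow> 'h fvec \<Rightarrow> complex" where
  "exp_cre_ip ip h \<Psi> \<Phi> = (\<Sum>n. fin_ip ip (exp_cre_comp h n \<Psi>) (exp_cre_comp h n \<Phi>))"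

end

theory Submission
  imports Defs
begin

text \<open>Inner products of symmetric tensors are permanents of Gram matrices. Letting a(g) act
  on one side of an inner product amounts to adjoining, on the other side, a phantom vector whose
  pairing with x is <g,x> and with itself 0; applying e^{a^dagger(h)} to both sides pads them
  with copies of h, i.e. with a phantom whose pairings are <h,x> and <h,h>. Expanding the padded
  permanents along their rows turns both inner products into the same finite sum over partial
  matchings between the tensor factors of Psi and Phi: <Psi,Phi>_g is this sum for the functional
  g, and <e^{a^dagger(h)} Psi, e^{a^dagger(h)} Phi> is exp <h,h> times it for the functional
  <h,.>. The vacuum term is exactly exp <h,h>, and the matching sum depends on the functional
  only through finitely many pairings <g,f> with f in T, so the quotient converges.\<close>

lemma sum_mset_sum_mset: "(\<Sum>s\<in>#(\<Sum>t\<in>#A. F t). f s) = (\<Sum>t\<in>#A. \<Sum>s\<in>#F t. f s)"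
  by (induction A) auto

lemma sum_sum_mset_swap: "(\<Sum>k\<in>K. \<Sum>t\<in>#M. f k t) = (\<Sum>t\<in>#M. \<Sum>k\<in>K. f k t)"
  by (induction M) (auto simp: sum.distrib)

lemma cnj_sum_mset: "cnj (\<Sum>s\<in>#M. f s) = (\<Sum>s\<in>#M. cnj (f s))"
  by (induction M) auto

lemma sums_sum_mset:
  fixes f :: "'a \<Rightarrow> nat \<Rightarrow> 'b::real_normed_vector"
  shows "(\<And>t. f t sums s t) \<Longrightarrow> (\<lambda>n. \<Sum>t\<in>#M. f t n) sums (\<Sum>t\<in>#M. s t)"
  by (induction M) (simp_all add: sums_add)

lemma tendsto_sum_mset:
  fixes f :: "'a \<Rightarrow> 'b \<Rightarrow> 'c::topological_comm_monoid_add"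
  shows "(\<And>t. t \<in># M \<Longrightarrow> (f t \<longlongrightarrow> l t) F) \<Longrightarrow> ((\<lambda>x. \<Sum>t\<in>#M. f t x) \<longlongrightarrow> (\<Sum>t\<in>#M. l t)) F"
  by (induction M) (simp_all add: tendsto_add)

lemma sum_lessThan_add: "(\<Sum>j<m + (n::nat). f j) = (\<Sum>j<m. f j) + (\<Sum>j<n. f (m + j))"
  by (induction n) (simp_all add: add_ac)

section \<open>Permanents\<close>

definition permanent :: "nat \<Rightarrow> (nat \<Rightarrow> nat \<Rightarrow> 'a::comm_semiring_1) \<Rightarrow> 'a" where
  "permanent n A = (\<Sum>\<tau> | \<tau> permutes {..<n}. \<Prod>i<n. A i (\<tau> i))"

lemma permutes_lessThan_less: "p permutes {..<n} \<Longrightarrow> i < n \<Longrightarrow> p i < n"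
  using permutes_in_image by fastforce

lemma permanent_cong:
  "(\<And>i j. i < n \<Longrightarrow> j < n \<Longrightarrow> A i j = B i j) \<Longrightarrow> permanent n A = permanent n B"
  unfolding permanent_def by (intro sum.cong prod.cong refl) (auto simp: permutes_lessThan_less)

lemma permanent_permute_rows:
  assumes "\<sigma> permutes {..<n}"
  shows "permanent n (\<lambda>i. A (\<sigma> i)) = permanent n A"
proof -
  have "permanent n (\<lambda>i. A (\<sigma> i)) = (\<Sum>\<tau> | \<tau> permutes {..<n}. \<Prod>i<n. A i ((\<tau> \<circ> inv \<sigma>) i))"
    unfolding permanent_def
    by (rule sum.cong[OF refl], subst prod.permutes_inv[OF assms, of "\<lambda>a b. A a (_ b)"]) simp
  also have "\<dots> = permanent n A"
    unfolding permanent_def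
    by (rule sum_permutations_compose_right[symmetric, OF permutes_inv[OF assms]])
  finally show ?thesis .
qed

lemma permanent_transpose: "permanent n (\<lambda>i j. A j i) = permanent n A"
proof -
  have "permanent n (\<lambda>i j. A j i) = (\<Sum>\<tau> | \<tau> permutes {..<n}. \<Prod>i<n. A i (inv \<tau> i))"
    unfolding permanent_def
    by (rule sum.cong[OF refl], subst prod.permutes_inv[of _ _ "\<lambda>a b. A a b"]) auto
  also have "\<dots> = permanent n A"
    unfolding permanent_def by (rule sum_permutations_inverse[symmetric])
  finally show ?thesis .
qed

lemma permanent_const_rows: "permanent n (\<lambda>i j. b j) = fact n * (\<Prod>j<n. b j)"
proof -
  have "permanent n (\<lambda>i j. b j) = (\<Sum>\<tau> | \<tau> permutes {..<n}. \<Prod>j<n. b j)"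
    unfolding permanent_def
    by (intro sum.cong refl) (simp add: prod.permute[of _ _ b, unfolded comp_def])
  then show ?thesis
    by (simp add: card_permutations)
qed

lemma permanent_expand_last_row:
  "permanent (Suc n) A = (\<Sum>j<Suc n. A n j * permanent n (\<lambda>i k. A i (Transposition.transpose n j k)))"
proof -
  have "permanent (Suc n) A = (\<Sum>j\<in>insert n {..<n}. \<Sum>q | q permutes {..<n}.
          \<Prod>i<Suc n. A i ((Transposition.transpose n j \<circ> q) i))"
    unfolding permanent_def lessThan_Suc by (rule sum_over_permutations_insert) auto
  also have "\<dots> = (\<Sum>j\<in>insert n {..<n}. A n j * permanent n (\<lambda>i k. A i (Transposition.transpose n j k)))"
    unfolding permanent_def sum_distrib_left
    by (intro sum.cong refl) (simp add: lessThan_Suc permutes_not_in)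
  finally show ?thesis by (simp add: lessThan_Suc)
qed

lemma sum_permutations_apply_0:
  "(\<Sum>\<sigma> | \<sigma> permutes {..<Suc m}. f (\<sigma> 0)) = fact m * (\<Sum>i<Suc m. f i)"
proof -
  have swap: "Transposition.transpose 0 m permutes {..<Suc m}"
    by (rule permutes_swap_id) auto
  have "(\<Sum>\<sigma> | \<sigma> permutes {..<Suc m}. f (\<sigma> 0)) =
        (\<Sum>\<sigma> | \<sigma> permutes {..<Suc m}. f ((\<sigma> \<circ> Transposition.transpose 0 m) m))"
    by simp
  also have "\<dots> = (\<Sum>\<sigma> | \<sigma> permutes {..<Suc m}. f (\<sigma> m))"
    by (rule sum_permutations_compose_right[OF swap, symmetric, of "\<lambda>\<sigma>. f (\<sigma> m)"])
  also have "\<dots> = (\<Sum>j\<in>insert m {..<m}. \<Sum>q | q permutes {..<m}. f ((Transposition.transpose m j \<circ> q) m))"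
    unfolding lessThan_Suc by (rule sum_over_permutations_insert) auto
  also have "\<dots> = (\<Sum>j\<in>insert m {..<m}. \<Sum>q | q permutes {..<m}. f j)"
    by (intro sum.cong refl) (simp add: permutes_not_in)
  also have "\<dots> = fact m * (\<Sum>i<Suc m. f i)"
    by (simp add: card_permutations lessThan_Suc sum_distrib_left distrib_left)
  finally show ?thesis .
qed

definition kernel_permanent :: "('a \<Rightarrow> 'b \<Rightarrow> 'c::comm_semiring_1) \<Rightarrow> 'a list \<Rightarrow> 'b list \<Rightarrow> 'c" where
  "kernel_permanent k xs ys =
     (if length xs = length ys then permanent (length xs) (\<lambda>i j. k (xs ! i) (ys ! j)) else 0)"

lemma kernel_permanent_swap: "kernel_permanent k xs ys = kernel_permanent (\<lambda>y x. k x y) ys xs"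
  unfolding kernel_permanent_def
  using permanent_transpose[of "length ys" "\<lambda>i j. k (xs ! j) (ys ! i)"] by auto

lemma kernel_permanent_map:
  "kernel_permanent k (map f xs) (map h ys) = kernel_permanent (\<lambda>x y. k (f x) (h y)) xs ys"
  by (auto simp: kernel_permanent_def intro!: permanent_cong)

lemma kernel_permanent_mset_left:
  assumes "mset xs = mset xs'"
  shows "kernel_permanent k xs ys = kernel_permanent k xs' ys"
proof (cases "length xs = length ys")
  case True
  obtain p where p: "p permutes {..<length xs'}" "permute_list p xs' = xs"
    using mset_eq_permutation[OF assms] by blast
  have len: "length xs' = length ys"
    using True assms mset_eq_length by metis
  have "kernel_permanent k xs ys = permanent (length ys) (\<lambda>i. (\<lambda>i j. k (xs' ! i) (ys ! j)) (p i))"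
    using True p len by (auto simp: kernel_permanent_def permute_list_nth intro!: permanent_cong)
  also have "\<dots> = kernel_permanent k xs' ys"
    using permanent_permute_rows[OF p(1)[unfolded len]] len by (simp add: kernel_permanent_def)
  finally show ?thesis .
next
  case False
  moreover have "length xs' = length xs"
    using assms mset_eq_length by metis
  ultimately show ?thesis
    by (simp add: kernel_permanent_def)
qed

lemma kernel_permanent_mset_right:
  "mset ys = mset ys' \<Longrightarrow> kernel_permanent k xs ys = kernel_permanent k xs ys'"
  by (metis kernel_permanent_swap kernel_permanent_mset_left)

definition remove_nth :: "nat \<Rightarrow> 'a list \<Rightarrow> 'a list" where
  "remove_nth j xs = take j xs @ drop (Suc j) xs"

lemma length_remove_nth [simp]: "j < length xs \<Longrightarrow> length (remove_nth j xs) = length xs - 1"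
  by (simp add: remove_nth_def)

lemma mset_remove_nth:
  assumes "j < length xs"
  shows "mset (remove_nth j xs) = mset xs - {#xs ! j#}"
proof -
  have "mset xs = mset (take j xs @ xs ! j # drop (Suc j) xs)"
    using id_take_nth_drop[OF assms] by simp
  then show ?thesis
    by (simp add: remove_nth_def)
qed

lemma set_remove_nth_subset: "set (remove_nth j xs) \<subseteq> set xs"
  by (auto simp: remove_nth_def dest: in_set_takeD in_set_dropD)

lemma remove_nth_append: "remove_nth (length us + j) (us @ zs) = us @ remove_nth j zs"
  by (simp add: remove_nth_def)

lemma remove_nth_map: "remove_nth j (map f xs) = map f (remove_nth j xs)"
  by (simp add: remove_nth_def take_map drop_map)

lemma mset_remove_nth_permute_list:
  assumes "\<sigma> permutes {..<length xs}" "i < length xs"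
  shows "mset (remove_nth i (permute_list \<sigma> xs)) = mset (remove_nth (\<sigma> i) xs)"
  using assms permutes_lessThan_less[OF assms]
  by (simp add: mset_remove_nth permute_list_nth mset_permute_list)

lemma kernel_permanent_remove_nth:
  assumes "length xs = n" "length ys = Suc n" "j \<le> n"
  shows "kernel_permanent k xs (remove_nth j ys) =
    permanent n (\<lambda>i l. k (xs ! i) (ys ! Transposition.transpose n j l))"
proof -
  let ?\<tau> = "Transposition.transpose n j"
  have \<tau>: "?\<tau> permutes {..<length ys}"
    using assms by (intro permutes_swap_id) auto
  have "remove_nth n (permute_list ?\<tau> ys) = map (\<lambda>l. ys ! ?\<tau> l) [0..<n]"
    using assms by (simp add: remove_nth_def permute_list_def take_map)
  then have "mset (remove_nth j ys) = mset (map (\<lambda>l. ys ! ?\<tau> l) [0..<n])"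
    using mset_remove_nth_permute_list[OF \<tau>, of n] assms by simp
  then have "kernel_permanent k xs (remove_nth j ys) =
      kernel_permanent k xs (map (\<lambda>l. ys ! ?\<tau> l) [0..<n])"
    by (rule kernel_permanent_mset_right)
  also have "\<dots> = permanent n (\<lambda>i l. k (xs ! i) (ys ! ?\<tau> l))"
    using assms by (auto simp: kernel_permanent_def intro!: permanent_cong)
  finally show ?thesis .
qed

lemma kernel_permanent_Cons_left:
  "kernel_permanent k (x # xs) ys =
      (\<Sum>j<length ys. k x (ys ! j) * kernel_permanent k xs (remove_nth j ys))"
proof (cases "length ys = Suc (length xs)")
  case True
  define n where "n = length xs"
  have "kernel_permanent k (x # xs) ys = kernel_permanent k (xs @ [x]) ys"
    by (rule kernel_permanent_mset_left) simp
  also have "\<dots> = (\<Sum>j<Suc n. k x (ys ! j) *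
      permanent n (\<lambda>i l. k ((xs @ [x]) ! i) (ys ! Transposition.transpose n j l)))"
    using True by (simp add: kernel_permanent_def permanent_expand_last_row n_def)
  also have "\<dots> = (\<Sum>j<Suc n. k x (ys ! j) * kernel_permanent k xs (remove_nth j ys))"
  proof (intro sum.cong refl arg_cong2[where f = "(*)"])
    fix j assume "j \<in> {..<Suc n}"
    then have "kernel_permanent k xs (remove_nth j ys) =
        permanent n (\<lambda>i l. k (xs ! i) (ys ! Transposition.transpose n j l))"
      using True by (intro kernel_permanent_remove_nth) (auto simp: n_def)
    also have "\<dots> = permanent n (\<lambda>i l. k ((xs @ [x]) ! i) (ys ! Transposition.transpose n j l))"
      by (intro permanent_cong) (simp add: nth_append n_def)
    finally show "\<dots> = kernel_permanent k xs (remove_nth j ys)" ..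
  qed
  finally show ?thesis
    using True by (simp add: n_def)
next
  case False
  then have "kernel_permanent k xs (remove_nth j ys) = 0" if "j < length ys" for j
    using that by (simp add: kernel_permanent_def)
  with False show ?thesis
    by (simp add: kernel_permanent_def[of _ "x # xs"] sum.neutral)
qed

section \<open>Padded permanents and the matching polynomial\<close>

definition pad :: "nat \<Rightarrow> 'a list \<Rightarrow> 'a option list" where
  "pad r xs = replicate r None @ map Some xs"

lemma length_pad [simp]: "length (pad r xs) = r + length xs"
  by (simp add: pad_def)

lemma Cons_None_pad: "None # pad r xs = pad (Suc r) xs"
  by (simp add: pad_def)

lemma remove_nth_pad: "remove_nth (r + j) (pad r xs) = pad r (remove_nth j xs)"
  using remove_nth_append[of "replicate r None" j "map Some xs"]
  by (simp add: pad_def remove_nth_map)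

lemma kernel_permanent_pad_mset_left:
  "mset xs = mset xs' \<Longrightarrow> kernel_permanent K (pad r xs) zs = kernel_permanent K (pad r xs') zs"
  by (rule kernel_permanent_mset_left) (simp add: pad_def)

lemma kernel_permanent_Cons_pad:
  "kernel_permanent K (a # as) (pad l ys) =
     of_nat l * K a None * kernel_permanent K as (pad (l - 1) ys) +
     (\<Sum>j<length ys. K a (Some (ys ! j)) * kernel_permanent K as (pad l (remove_nth j ys)))"
proof -
  have phantom_column: "kernel_permanent K as (remove_nth j (pad l ys)) =
      kernel_permanent K as (pad (l - 1) ys)"
    if "j < l" for j
  proof (rule kernel_permanent_mset_right)
    have "pad l ys ! j = None"
      using that by (simp add: pad_def nth_append)
    with that show "mset (remove_nth j (pad l ys)) = mset (pad (l - 1) ys)"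
      by (simp add: mset_remove_nth) (cases l; simp add: pad_def)
  qed
  show ?thesis
    unfolding kernel_permanent_Cons_left length_pad sum_lessThan_add
    by (simp add: phantom_column remove_nth_pad) (simp add: pad_def nth_append mult.assoc)
qed

text \<open>The phantom entry None stands for a vector h with <h,h> = z and <h,y> = <g,y>.\<close>

fun phantom_kernel ::
  "('h \<Rightarrow> 'h \<Rightarrow> complex) \<Rightarrow> ('h \<Rightarrow> complex) \<Rightarrow> complex \<Rightarrow> 'h option \<Rightarrow> 'h option \<Rightarrow> complex" where
  "phantom_kernel ip g z None None = z"
| "phantom_kernel ip g z None (Some y) = pair g y"
| "phantom_kernel ip g z (Some x) None = cnj (pair g x)"
| "phantom_kernel ip g z (Some x) (Some y) = ip x y"

definition padded_per ::
  "('h \<Rightarrow> 'h \<Rightarrow> complex) \<Rightarrow> ('h \<Rightarrow> complex) \<Rightarrow> complex \<Rightarrow> nat \<Rightarrow> 'h list \<Rightarrow> 'h list \<Rightarrow> complex" where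
  "padded_per ip g z n xs ys =
     (if length xs \<le> n \<and> length ys \<le> n then
        kernel_permanent (phantom_kernel ip g z) (pad (n - length xs) xs) (pad (n - length ys) ys) /
          (fact (n - length xs) * fact (n - length ys))
      else 0)"

text \<open>The sum over all partial matchings between xs and ys, in which a matched pair (x, y)
  contributes <x,y>, an unmatched x contributes the conjugate of <g,x>, and an unmatched y
  contributes <g,y>.\<close>

fun matching_poly :: "('h \<Rightarrow> 'h \<Rightarrow> complex) \<Rightarrow> ('h \<Rightarrow> complex) \<Rightarrow> 'h list \<Rightarrow> 'h list \<Rightarrow> complex" where
  "matching_poly ip g [] ys = prod_list (map (pair g) ys)"
| "matching_poly ip g (x # xs) ys =
     cnj (pair g x) * matching_poly ip g xs ys +
     (\<Sum>j<length ys. ip x (ys ! j) * matching_poly ip g xs (remove_nth j ys))"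

lemma padded_per_Nil:
  "padded_per ip g z n [] ys =
     (if length ys \<le> n then z ^ (n - length ys) / fact (n - length ys) * prod_list (map (pair g) ys)
      else 0)"
proof (cases "length ys \<le> n")
  case True
  define m where "m = n - length ys"
  let ?K = "phantom_kernel ip g z"
  have "kernel_permanent ?K (pad n []) (pad m ys) = permanent n (\<lambda>i j. ?K None (pad m ys ! j))"
    using True by (auto simp: kernel_permanent_def m_def pad_def intro!: permanent_cong)
  also have "\<dots> = fact n * prod_list (map (?K None) (pad m ys))"
    using True by (simp add: permanent_const_rows prod.list_conv_set_nth atLeast0LessThan m_def)
  also have "map (?K None) (pad m ys) = replicate m z @ map (pair g) ys"
    by (simp add: pad_def comp_def)
  finally show ?thesis
    using True by (simp add: padded_per_def m_def)
qed (simp add: padded_per_def)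

lemma padded_per_0_Cons [simp]: "padded_per ip g z 0 (x # xs) ys = 0"
  by (simp add: padded_per_def)

lemma padded_per_Suc_Cons:
  "padded_per ip g z (Suc n) (x # xs) ys =
     cnj (pair g x) * padded_per ip g z n xs ys +
     (\<Sum>j<length ys. ip x (ys ! j) * padded_per ip g z n xs (remove_nth j ys))"
proof (cases "length xs \<le> n \<and> length ys \<le> Suc n")
  case True
  define k l where "k = n - length xs" and "l = Suc n - length ys"
  let ?K = "phantom_kernel ip g z"
  have "kernel_permanent ?K (pad k (x # xs)) (pad l ys) =
      kernel_permanent ?K (Some x # pad k xs) (pad l ys)"
    by (rule kernel_permanent_mset_left) (simp add: pad_def)
  also have "\<dots> = of_nat l * cnj (pair g x) * kernel_permanent ?K (pad k xs) (pad (l - 1) ys) +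
     (\<Sum>j<length ys. ip x (ys ! j) * kernel_permanent ?K (pad k xs) (pad l (remove_nth j ys)))"
    by (simp add: kernel_permanent_Cons_pad)
  finally have expand: "kernel_permanent ?K (pad k (x # xs)) (pad l ys) = \<dots>" .
  have first: "of_nat l * cnj (pair g x) * kernel_permanent ?K (pad k xs) (pad (l - 1) ys) /
      (fact k * fact l) =
    cnj (pair g x) * padded_per ip g z n xs ys"
  proof (cases "l = 0")
    case False
    then have "length ys \<le> n" "n - length ys = l - 1"
      by (auto simp: l_def)
    then have "padded_per ip g z n xs ys =
        kernel_permanent ?K (pad k xs) (pad (l - 1) ys) / (fact k * fact (l - 1))"
      using True by (simp add: padded_per_def k_def)
    moreover have "fact l = (of_nat l * fact (l - 1) :: complex)"
      using False by (simp add: fact_reduce)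
    ultimately show ?thesis
      using False by (simp add: field_simps)
  qed (use True in \<open>simp add: padded_per_def l_def\<close>)
  have rest: "ip x (ys ! j) * kernel_permanent ?K (pad k xs) (pad l (remove_nth j ys)) /
      (fact k * fact l) =
    ip x (ys ! j) * padded_per ip g z n xs (remove_nth j ys)" if "j < length ys" for j
    using True that by (auto simp: padded_per_def k_def l_def)
  have "padded_per ip g z (Suc n) (x # xs) ys =
      kernel_permanent ?K (pad k (x # xs)) (pad l ys) / (fact k * fact l)"
    using True by (simp add: padded_per_def k_def l_def)
  then show ?thesis
    unfolding expand add_divide_distrib sum_divide_distrib first
    using rest by simp
next
  case False
  then show ?thesis
    by (auto simp: padded_per_def intro!: sum.neutral)
qed

lemma padded_per_sums: "(\<lambda>n. padded_per ip g z n xs ys) sums (exp z * matching_poly ip g xs ys)"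
proof (induction xs arbitrary: ys)
  case Nil
  have "(\<lambda>n. z ^ n / fact n * prod_list (map (pair g) ys)) sums (exp z * prod_list (map (pair g) ys))"
    using sums_mult2[OF exp_converges[of z], of "prod_list (map (pair g) ys)"]
    by (simp add: scaleR_conv_of_real divide_inverse mult_ac)
  then have "(\<lambda>n. padded_per ip g z (n + length ys) [] ys) sums (exp z * matching_poly ip g [] ys)"
    by (simp add: padded_per_Nil)
  then show ?case
    by (subst (asm) sums_zero_iff_shift) (auto simp: padded_per_Nil)
next
  case (Cons x xs)
  have "(\<lambda>n. padded_per ip g z (Suc n) (x # xs) ys) sums
     (cnj (pair g x) * (exp z * matching_poly ip g xs ys) +
      (\<Sum>j<length ys. ip x (ys ! j) * (exp z * matching_poly ip g xs (remove_nth j ys))))"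
    unfolding padded_per_Suc_Cons by (intro sums_add sums_mult sums_sum Cons.IH)
  then show ?case
    by (subst (asm) sums_Suc_iff) (simp add: sum_distrib_left algebra_simps)
qed

lemma padded_per_eq_0:
  "length xs + length ys < n \<Longrightarrow> padded_per ip g 0 n xs ys = 0"
proof (induction xs arbitrary: n ys)
  case Nil
  then show ?case
    by (simp add: padded_per_Nil)
next
  case (Cons x xs)
  then obtain m where n: "n = Suc m"
    by (cases n) auto
  have "padded_per ip g 0 m xs ys = 0"
    using Cons.prems by (intro Cons.IH) (simp add: n)
  moreover have "padded_per ip g 0 m xs (remove_nth j ys) = 0" if "j < length ys" for j
    using Cons.prems that by (intro Cons.IH) (auto simp: n)
  ultimately show ?case
    by (simp add: n padded_per_Suc_Cons)
qed

lemma sum_padded_per_0: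
  assumes "length ys \<le> B"
  shows "(\<Sum>l\<le>B. padded_per ip g 0 (l + length xs) xs ys) = matching_poly ip g xs ys"
proof -
  have "(\<lambda>n. padded_per ip g 0 n xs ys) sums matching_poly ip g xs ys"
    using padded_per_sums[of ip g 0] by simp
  then have "(\<lambda>l. padded_per ip g 0 (l + length xs) xs ys) sums matching_poly ip g xs ys"
    by (subst sums_zero_iff_shift) (auto simp: padded_per_def)
  moreover have "(\<lambda>l. padded_per ip g 0 (l + length xs) xs ys) sums
      (\<Sum>l\<le>B. padded_per ip g 0 (l + length xs) xs ys)"
    using assms by (intro sums_finite padded_per_eq_0) auto
  ultimately show ?thesis
    using sums_unique2 by metis
qed

lemma sum_kernel_permanent_pad_right:
  "(\<Sum>k\<le>A. kernel_permanent (phantom_kernel ip g z) (pad l xs) (pad k ys) / (fact k * fact l)) =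
    (if l + length xs - length ys \<le> A then padded_per ip g z (l + length xs) xs ys else 0)"
proof -
  define p q where "p = length xs" and "q = length ys"
  have diagonal: "kernel_permanent (phantom_kernel ip g z) (pad l xs) (pad k ys) / (fact k * fact l) =
      (if k = l + p - q then padded_per ip g z (l + p) xs ys else 0)" for k
    by (cases "q \<le> l + p") (auto simp: padded_per_def kernel_permanent_def p_def q_def mult.commute)
  show ?thesis
    by (simp add: diagonal p_def q_def)
qed

lemma matching_poly_eq_double_sum:
  assumes "length xs \<le> A" "length ys \<le> B"
  shows "(\<Sum>l\<le>B. \<Sum>k\<le>A.
      kernel_permanent (phantom_kernel ip g 0) (pad l xs) (pad k ys) / (fact k * fact l)) =
    matching_poly ip g xs ys"
proof -
  have "padded_per ip g 0 (l + length xs) xs ys = 0" if "A < l + length xs - length ys" for l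
    using that assms(1) by (intro padded_per_eq_0) linarith
  then have "(\<Sum>l\<le>B. \<Sum>k\<le>A.
      kernel_permanent (phantom_kernel ip g 0) (pad l xs) (pad k ys) / (fact k * fact l)) =
      (\<Sum>l\<le>B. padded_per ip g 0 (l + length xs) xs ys)"
    unfolding sum_kernel_permanent_pad_right by (intro sum.cong) auto
  also have "\<dots> = matching_poly ip g xs ys"
    using assms(2) by (rule sum_padded_per_0)
  finally show ?thesis .
qed

definition sqrt_fact :: "nat \<Rightarrow> complex" where
  "sqrt_fact n = complex_of_real (sqrt (fact n))"

lemma sqrt_fact_nonzero [simp]: "sqrt_fact n \<noteq> 0"
  by (simp add: sqrt_fact_def)

lemma sqrt_fact_0 [simp]: "sqrt_fact 0 = 1"
  by (simp add: sqrt_fact_def)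

lemma cnj_sqrt_fact [simp]: "cnj (sqrt_fact n) = sqrt_fact n"
  by (simp add: sqrt_fact_def)

lemma sqrt_fact_mult_self: "sqrt_fact n * sqrt_fact n = fact n"
  by (simp add: sqrt_fact_def flip: of_real_mult)

definition matching_form :: "('h \<Rightarrow> 'h \<Rightarrow> complex) \<Rightarrow> ('h \<Rightarrow> complex) \<Rightarrow> 'h fvec \<Rightarrow> 'h fvec \<Rightarrow> complex" where
  "matching_form ip g \<Psi> \<Phi> =
     (\<Sum>t\<in>#\<Psi>. \<Sum>u\<in>#\<Phi>. cnj (fst t) * fst u / (sqrt_fact (length (snd t)) * sqrt_fact (length (snd u))) *
        matching_poly ip g (snd t) (snd u))"

lemma matching_form_vac [simp]: "matching_form ip g vac vac = 1"
  by (simp add: matching_form_def vac_def)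

lemma fin_ip_add_left: "fin_ip ip (A + A') B = fin_ip ip A B + fin_ip ip A' B"
  by (simp add: fin_ip_def)

lemma fin_ip_add_right: "fin_ip ip A (B + B') = fin_ip ip A B + fin_ip ip A B'"
  by (simp add: fin_ip_def sum_mset.distrib)

lemma fin_ip_empty_left [simp]: "fin_ip ip {#} B = 0"
  by (simp add: fin_ip_def)

lemma fin_ip_empty_right [simp]: "fin_ip ip A {#} = 0"
  by (simp add: fin_ip_def)

lemma fin_ip_sum_left: "fin_ip ip (\<Sum>k\<in>K. F k) B = (\<Sum>k\<in>K. fin_ip ip (F k) B)"
  by (induction K rule: infinite_finite_induct) (auto simp: fin_ip_add_left)

lemma fin_ip_sum_right: "fin_ip ip A (\<Sum>k\<in>K. F k) = (\<Sum>k\<in>K. fin_ip ip A (F k))"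
  by (induction K rule: infinite_finite_induct) (auto simp: fin_ip_add_right)

lemma fin_ip_sum_mset_left: "fin_ip ip (\<Sum>t\<in>#M. F t) B = (\<Sum>t\<in>#M. fin_ip ip (F t) B)"
  by (induction M) (simp_all add: fin_ip_add_left)

lemma fin_ip_sum_mset_right: "fin_ip ip A (\<Sum>t\<in>#M. F t) = (\<Sum>t\<in>#M. fin_ip ip A (F t))"
  by (induction M) (simp_all add: fin_ip_add_right)

lemma fin_ip_scaleF_left: "fin_ip ip (scaleF a A) B = cnj a * fin_ip ip A B"
  by (induction A) (auto simp: fin_ip_def scaleF_def sum_mset_distrib_left mult_ac distrib_left)

lemma fin_ip_scaleF_right: "fin_ip ip A (scaleF b B) = b * fin_ip ip A B"
  by (induction B) (auto simp: fin_ip_def scaleF_def sum_mset_distrib_left sum_mset.distrib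
      mult_ac distrib_left)

lemma sym_ip_eq_kernel_permanent: "sym_ip ip xs ys = kernel_permanent ip xs ys / fact (length xs)"
proof (cases "length xs = length ys")
  case True
  define n where "n = length xs"
  have "(\<Sum>\<tau> | \<tau> permutes {..<n}. \<Prod>i<n. ip (xs ! \<sigma> i) (ys ! \<tau> i)) = kernel_permanent ip xs ys"
    if "\<sigma> permutes {..<n}" for \<sigma>
    using permanent_permute_rows[OF that, of "\<lambda>i j. ip (xs ! i) (ys ! j)"] True
    by (simp add: kernel_permanent_def permanent_def n_def)
  then have "sym_ip ip xs ys = (1 / fact n) ^ 2 * (\<Sum>\<sigma> | \<sigma> permutes {..<n}. kernel_permanent ip xs ys)"
    using True by (simp add: sym_ip_def n_def Let_def)
  also have "\<dots> = kernel_permanent ip xs ys / fact n"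
    by (simp add: card_permutations power2_eq_square)
  finally show ?thesis
    by (simp add: n_def)
qed (simp add: sym_ip_def kernel_permanent_def)

section \<open>Annihilation operators\<close>

lemma annihilation_constant:
  "complex_of_real (sqrt (real (Suc m)) / real (fact (Suc m))) * fact m =
      sqrt_fact m / sqrt_fact (Suc m)"
proof -
  define s where "s = sqrt (real (Suc m))"
  have pos: "s > 0" "sqrt (fact m :: real) > 0"
    by (auto simp: s_def)
  have "real (fact (Suc m)) = s * s * fact m"
    by (simp add: s_def algebra_simps)
  moreover have "sqrt (fact (Suc m)) = s * sqrt (fact m)"
    by (simp add: s_def real_sqrt_mult del: of_nat_Suc)
  ultimately have "s / real (fact (Suc m)) * fact m = sqrt (fact m) / sqrt (fact (Suc m))"
    using pos by (simp add: field_simps)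
  then have "complex_of_real (s / real (fact (Suc m)) * fact m) =
      complex_of_real (sqrt (fact m) / sqrt (fact (Suc m)))"
    by (rule arg_cong)
  then show ?thesis
    by (simp only: s_def of_real_mult of_real_divide of_real_fact sqrt_fact_def)
qed

lemma sum_ann_term:
  assumes "length xs = Suc m"
    and invariant: "\<And>c ys ys'. mset ys = mset ys' \<Longrightarrow> f (c, ys) = f (c, ys')"
  shows "(\<Sum>s\<in>#ann_term g (a, xs). f s) =
    fact m * (\<Sum>j<Suc m. f (a * complex_of_real (sqrt (real (Suc m)) / real (fact (Suc m))) *
      pair g (xs ! j), remove_nth j xs))"
proof -
  define c where "c = a * complex_of_real (sqrt (real (Suc m)) / real (fact (Suc m)))"
  have "ann_term g (a, xs) = image_mset (\<lambda>\<sigma>. (c * pair g (xs ! \<sigma> 0), map (\<lambda>i. xs ! \<sigma> i) [1..<Suc m]))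
      (mset_set {\<sigma>. \<sigma> permutes {..<Suc m}})"
    by (simp only: ann_term_def Let_def fst_conv snd_conv assms(1) c_def nat.distinct if_False)
  then have "(\<Sum>s\<in>#ann_term g (a, xs). f s) =
      (\<Sum>\<sigma> | \<sigma> permutes {..<Suc m}. f (c * pair g (xs ! \<sigma> 0), map (\<lambda>i. xs ! \<sigma> i) [1..<Suc m]))"
    by (simp add: sum_unfold_sum_mset multiset.map_comp comp_def)
  also have "\<dots> = (\<Sum>\<sigma> | \<sigma> permutes {..<Suc m}. f (c * pair g (xs ! \<sigma> 0), remove_nth (\<sigma> 0) xs))"
  proof (intro sum.cong refl invariant)
    fix \<sigma> assume "\<sigma> \<in> {\<sigma>. \<sigma> permutes {..<Suc m}}"
    then have \<sigma>: "\<sigma> permutes {..<length xs}"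
      using assms(1) by simp
    have "map (\<lambda>i. xs ! \<sigma> i) [1..<Suc m] = remove_nth 0 (permute_list \<sigma> xs)"
      by (simp add: remove_nth_def permute_list_def assms(1) drop_map upt_rec)
    then show "mset (map (\<lambda>i. xs ! \<sigma> i) [1..<Suc m]) = mset (remove_nth (\<sigma> 0) xs)"
      using mset_remove_nth_permute_list[OF \<sigma>, of 0] assms(1) by simp
  qed
  also have "\<dots> = fact m * (\<Sum>j<Suc m. f (c * pair g (xs ! j), remove_nth j xs))"
    by (rule sum_permutations_apply_0)
  finally show ?thesis
    by (simp only: c_def)
qed

lemma kernel_permanent_pad_None:
  assumes "K None None = 0"
  shows "kernel_permanent K (pad r xs) (None # cols) =
    (\<Sum>j<length xs. K (Some (xs ! j)) None * kernel_permanent K (pad r (remove_nth j xs)) cols)"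
  using kernel_permanent_Cons_pad[of "\<lambda>y x. K x y" None cols r xs] assms
  by (simp add: kernel_permanent_swap[of K])

lemma sum_ann_term_kernel_permanent:
  assumes "K None None = 0" and "\<And>x. K (Some x) None = cnj (pair g x)"
  shows "(\<Sum>s\<in>#ann_term g t. cnj (fst s) * kernel_permanent K (pad r (snd s)) cols /
      sqrt_fact (length (snd s))) =
    cnj (fst t) * kernel_permanent K (pad r (snd t)) (None # cols) / sqrt_fact (length (snd t))"
proof -
  obtain a xs where t: "t = (a, xs)"
    by fastforce
  consider "xs = []" | m where "length xs = Suc m"
    by (cases xs) auto
  then show ?thesis
  proof cases
    case 1
    then show ?thesis
      using assms(1) by (simp add: t ann_term_def kernel_permanent_pad_None)
  next
    case (2 m)
    define c where "c = complex_of_real (sqrt (real (Suc m)) / real (fact (Suc m)))"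
    have cnj_c: "cnj c = c"
      by (simp add: c_def)
    have c: "c * fact m = sqrt_fact m / sqrt_fact (Suc m)"
      unfolding c_def by (rule annihilation_constant)
    define F where "F s =
        cnj (fst s) * kernel_permanent K (pad r (snd s)) cols / sqrt_fact (length (snd s))"
      for s :: "complex \<times> 'a list"
    have invariant: "F (b, zs) = F (b, zs')" if "mset zs = mset zs'" for b zs zs'
      using kernel_permanent_pad_mset_left[OF that, of K r cols] mset_eq_length[OF that]
      by (simp add: F_def)
    have "(\<Sum>s\<in>#ann_term g (a, xs). F s) =
        fact m * (\<Sum>j<Suc m. F (a * c * pair g (xs ! j), remove_nth j xs))"
      using 2 invariant unfolding c_def by (rule sum_ann_term)
    also have "\<dots> = cnj a * (c * fact m) / sqrt_fact m *
        (\<Sum>j<Suc m. K (Some (xs ! j)) None * kernel_permanent K (pad r (remove_nth j xs)) cols)"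
      unfolding sum_distrib_left
      using 2 cnj_c by (intro sum.cong refl) (simp add: F_def assms(2) divide_inverse mult_ac)
    also have "\<dots> = cnj a * kernel_permanent K (pad r xs) (None # cols) / sqrt_fact (length xs)"
      unfolding c using 2 by (simp add: kernel_permanent_pad_None assms(1))
    finally show ?thesis
      by (simp add: t F_def)
  qed
qed

lemma cnj_kernel_permanent: "cnj (kernel_permanent k xs ys) = kernel_permanent (\<lambda>y x. cnj (k x y)) ys xs"
  by (subst kernel_permanent_swap) (simp add: kernel_permanent_def permanent_def)

lemma sum_ann_term_kernel_permanent_right:
  assumes "K None None = 0" and "\<And>y. K None (Some y) = pair g y"
  shows "(\<Sum>s\<in>#ann_term g u. fst s * kernel_permanent K zs (pad c (snd s)) /
      sqrt_fact (length (snd s))) =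
    fst u * kernel_permanent K (None # zs) (pad c (snd u)) / sqrt_fact (length (snd u))"
proof -
  let ?K = "\<lambda>y x. cnj (K x y)"
  have "(\<Sum>s\<in>#ann_term g u. cnj (fst s) * kernel_permanent ?K (pad c (snd s)) zs /
      sqrt_fact (length (snd s))) =
    cnj (fst u) * kernel_permanent ?K (pad c (snd u)) (None # zs) / sqrt_fact (length (snd u))"
    by (rule sum_ann_term_kernel_permanent) (simp_all add: assms)
  then have "cnj (\<Sum>s\<in>#ann_term g u. cnj (fst s) * kernel_permanent ?K (pad c (snd s)) zs /
      sqrt_fact (length (snd s))) =
    cnj (cnj (fst u) * kernel_permanent ?K (pad c (snd u)) (None # zs) / sqrt_fact (length (snd u)))"
    by (rule arg_cong)
  then show ?thesis
    by (simp add: cnj_sum_mset cnj_kernel_permanent)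
qed

text \<open>ann_form ip g A B r c is the inner product of a(g)^c A with a(g)^r B
  (\<open>fin_ip_ann_pow\<close>): an annihilator acting on one side becomes a phantom on the other.\<close>

definition ann_form ::
  "('h \<Rightarrow> 'h \<Rightarrow> complex) \<Rightarrow> ('h \<Rightarrow> complex) \<Rightarrow> 'h fvec \<Rightarrow> 'h fvec \<Rightarrow> nat \<Rightarrow> nat \<Rightarrow> complex" where
  "ann_form ip g A B r c =
     (\<Sum>t\<in>#A. \<Sum>u\<in>#B. cnj (fst t) * fst u *
        kernel_permanent (phantom_kernel ip g 0) (pad r (snd t)) (pad c (snd u)) /
        (sqrt_fact (length (snd t)) * sqrt_fact (length (snd u))))"

lemma ann_form_ann_left: "ann_form ip g (ann g A) B r c = ann_form ip g A B r (Suc c)"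
proof -
  let ?K = "phantom_kernel ip g 0"
  have "ann_form ip g (ann g A) B r c =
      (\<Sum>t\<in>#A. \<Sum>u\<in>#B. fst u / sqrt_fact (length (snd u)) *
        (\<Sum>s\<in>#ann_term g t. cnj (fst s) * kernel_permanent ?K (pad r (snd s)) (pad c (snd u)) /
          sqrt_fact (length (snd s))))"
    unfolding ann_form_def ann_def sum_mset_sum_mset
    by (subst sum_mset.swap) (simp add: sum_mset_distrib_left mult_ac)
  also have "\<dots> = ann_form ip g A B r (Suc c)"
    unfolding ann_form_def
    by (simp add: sum_ann_term_kernel_permanent Cons_None_pad mult_ac)
  finally show ?thesis .
qed

lemma ann_form_ann_right: "ann_form ip g A (ann g B) r c = ann_form ip g A B (Suc r) c"
proof -
  let ?K = "phantom_kernel ip g 0"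
  have "ann_form ip g A (ann g B) r c =
      (\<Sum>t\<in>#A. \<Sum>u\<in>#B. cnj (fst t) / sqrt_fact (length (snd t)) *
        (\<Sum>s\<in>#ann_term g u. fst s * kernel_permanent ?K (pad r (snd t)) (pad c (snd s)) /
          sqrt_fact (length (snd s))))"
    unfolding ann_form_def ann_def sum_mset_sum_mset
    by (simp add: sum_mset_distrib_left mult_ac)
  also have "\<dots> = ann_form ip g A B (Suc r) c"
    unfolding ann_form_def
    by (simp add: sum_ann_term_kernel_permanent_right Cons_None_pad mult_ac)
  finally show ?thesis .
qed

lemma fin_ip_eq_ann_form: "fin_ip ip A B = ann_form ip g A B 0 0"
proof -
  have "sym_ip ip xs ys = kernel_permanent (phantom_kernel ip g 0) (pad 0 xs) (pad 0 ys) /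
      (sqrt_fact (length xs) * sqrt_fact (length ys))" for xs ys
    by (cases "length xs = length ys")
      (simp_all add: sym_ip_eq_kernel_permanent pad_def kernel_permanent_map sqrt_fact_mult_self,
       simp add: kernel_permanent_def)
  then show ?thesis
    by (simp add: fin_ip_def ann_form_def mult_ac)
qed

lemma fin_ip_ann_pow: "fin_ip ip ((ann g ^^ k) A) ((ann g ^^ l) B) = ann_form ip g A B l k"
proof -
  have left: "ann_form ip g ((ann g ^^ k) A) B' r c = ann_form ip g A B' r (c + k)" for B' r c
    by (induction k arbitrary: c) (simp_all add: ann_form_ann_left)
  have right: "ann_form ip g A ((ann g ^^ l) B) r c = ann_form ip g A B (r + l) c" for r c
    by (induction l arbitrary: r) (simp_all add: ann_form_ann_right)
  show ?thesis
    by (simp add: fin_ip_eq_ann_form[where g = g] left right)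
qed

lemma max_len_ge: "t \<in># \<Psi> \<Longrightarrow> length (snd t) \<le> max_len \<Psi>"
  unfolding max_len_def by (rule Max_ge) auto

lemma g_ip_eq_matching_form: "g_ip ip g \<Psi> \<Phi> = matching_form ip g \<Psi> \<Phi>"
proof -
  let ?K = "phantom_kernel ip g 0"
  have "g_ip ip g \<Psi> \<Phi> = (\<Sum>l\<le>max_len \<Phi>. \<Sum>k\<le>max_len \<Psi>. 1 / (fact k * fact l) * ann_form ip g \<Psi> \<Phi> l k)"
    unfolding g_ip_def exp_ann_def fin_ip_sum_left fin_ip_sum_right fin_ip_scaleF_left fin_ip_scaleF_right
      fin_ip_ann_pow
    by (simp add: sum_distrib_left mult_ac)
  also have "\<dots> =
      (\<Sum>t\<in>#\<Psi>. \<Sum>u\<in>#\<Phi>. cnj (fst t) * fst u / (sqrt_fact (length (snd t)) * sqrt_fact (length (snd u))) *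
      (\<Sum>l\<le>max_len \<Phi>. \<Sum>k\<le>max_len \<Psi>.
        kernel_permanent ?K (pad l (snd t)) (pad k (snd u)) / (fact k * fact l)))"
    unfolding ann_form_def sum_mset_distrib_left sum_distrib_left sum_sum_mset_swap
    by (intro arg_cong[where f = sum_mset] image_mset_cong sum.cong refl)
      (simp add: divide_inverse mult_ac)
  also have "\<dots> = matching_form ip g \<Psi> \<Phi>"
    unfolding matching_form_def
    by (intro arg_cong[where f = sum_mset] image_mset_cong arg_cong2[where f = "(*)"] refl
        matching_poly_eq_double_sum max_len_ge)
  finally show ?thesis .
qed

section \<open>Creation operators\<close>

definition riesz :: "('h \<Rightarrow> 'h \<Rightarrow> complex) \<Rightarrow> 'h \<Rightarrow> 'h \<Rightarrow> complex" where
  "riesz ip h = (\<lambda>x. cnj (ip h x))"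

lemma pair_riesz [simp]: "pair (riesz ip h) x = ip h x"
  by (simp add: pair_def riesz_def)

lemma phantom_kernel_riesz:
  assumes "\<forall>x y. ip y x = cnj (ip x y)"
  shows "phantom_kernel ip (riesz ip h) (ip h h) a b = ip (case_option h id a) (case_option h id b)"
proof (cases a)
  case (Some x)
  have "ip x h = cnj (ip h x)"
    using assms by blast
  with Some show ?thesis
    by (cases b) (simp_all add: pair_def riesz_def)
qed (cases b; simp add: pair_def riesz_def)

lemma map_case_option_pad: "map (case_option h id) (pad r xs) = replicate r h @ xs"
  by (simp add: pad_def comp_def)

lemma cre_pow_empty [simp]: "(cre h ^^ k) {#} = {#}"
  by (induction k) (simp_all add: cre_def)

lemma exp_cre_comp_add: "exp_cre_comp h n (A + B) = exp_cre_comp h n A + exp_cre_comp h n B"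
proof -
  have "(cre h ^^ k) (A + B) = (cre h ^^ k) A + (cre h ^^ k) B" for k A B
    by (induction k) (simp_all add: cre_def)
  then show ?thesis
    by (simp add: exp_cre_comp_def compF_def scaleF_def sum.distrib)
qed

lemma exp_cre_comp_sum_mset: "exp_cre_comp h n \<Psi> = (\<Sum>t\<in>#\<Psi>. exp_cre_comp h n {#t#})"
proof (induction \<Psi>)
  case empty
  then show ?case
    by (simp add: exp_cre_comp_def compF_def scaleF_def)
next
  case (add t \<Psi>)
  then show ?case
    using exp_cre_comp_add[of h n "{#t#}" \<Psi>] by simp
qed

lemma cre_pow_single:
  "(cre h ^^ k) {#(c, xs)#} =
     {#(c * complex_of_real (sqrt (fact (length xs + k) / fact (length xs))), replicate k h @ xs)#}"
proof (induction k)
  case (Suc k)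
  have "sqrt (real (length xs + k + 1)) * sqrt (fact (length xs + k) / fact (length xs)) =
      sqrt (fact (length xs + Suc k) / fact (length xs) :: real)"
    by (simp add: algebra_simps flip: real_sqrt_mult)
  then show ?case
    using Suc.IH by (simp add: cre_def mult_ac add_ac flip: of_real_mult)
qed simp

lemma exp_cre_comp_single:
  "exp_cre_comp h n {#(c, xs)#} =
     (if length xs \<le> n then
        {#(c * complex_of_real (sqrt (fact n / fact (length xs))) / fact (n - length xs),
           replicate (n - length xs) h @ xs)#}
      else {#})"
proof -
  define p where "p = length xs"
  have "exp_cre_comp h n {#(c, xs)#} =
      (\<Sum>k\<le>n. if k = n - p \<and> p \<le> n then scaleF (1 / fact k) ((cre h ^^ k) {#(c, xs)#}) else {#})"
    unfolding exp_cre_comp_def compF_def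
    by (intro sum.cong refl) (auto simp: p_def scaleF_def)
  also have "\<dots> = (if p \<le> n then scaleF (1 / fact (n - p)) ((cre h ^^ (n - p)) {#(c, xs)#}) else {#})"
    by (cases "p \<le> n") (simp_all add: sum.delta)
  finally show ?thesis
    by (simp add: p_def cre_pow_single scaleF_def mult_ac)
qed

lemma creation_constant:
  assumes "p \<le> n" "q \<le> n"
  shows "complex_of_real (sqrt (fact n / fact p)) * complex_of_real (sqrt (fact n / fact q)) / fact n =
    1 / (sqrt_fact p * sqrt_fact q)"
proof -
  have "sqrt (fact n / fact p) * sqrt (fact n / fact q) / fact n =
      1 / (sqrt (fact p) * sqrt (fact q) :: real)"
    by (simp add: real_sqrt_divide)
  then have "complex_of_real (sqrt (fact n / fact p) * sqrt (fact n / fact q) / fact n) =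
      complex_of_real (1 / (sqrt (fact p) * sqrt (fact q)))"
    by (rule arg_cong)
  then show ?thesis
    by (simp add: sqrt_fact_def)
qed

lemma fin_ip_exp_cre_comp_single:
  assumes "\<forall>x y. ip y x = cnj (ip x y)"
  shows "fin_ip ip (exp_cre_comp h n {#t#}) (exp_cre_comp h n {#u#}) =
    cnj (fst t) * fst u / (sqrt_fact (length (snd t)) * sqrt_fact (length (snd u))) *
    padded_per ip (riesz ip h) (ip h h) n (snd t) (snd u)"
proof -
  obtain c xs d ys where tu: "t = (c, xs)" "u = (d, ys)"
    by fastforce
  define p q where "p = length xs" and "q = length ys"
  show ?thesis
  proof (cases "p \<le> n \<and> q \<le> n")
    case True
    have kernel: "kernel_permanent ip (replicate (n - p) h @ xs) (replicate (n - q) h @ ys) =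
        kernel_permanent (phantom_kernel ip (riesz ip h) (ip h h)) (pad (n - p) xs) (pad (n - q) ys)"
      unfolding map_case_option_pad[symmetric] kernel_permanent_map phantom_kernel_riesz[OF assms] ..
    have "fin_ip ip (exp_cre_comp h n {#t#}) (exp_cre_comp h n {#u#}) =
        cnj (c * complex_of_real (sqrt (fact n / fact p)) / fact (n - p)) *
        (d * complex_of_real (sqrt (fact n / fact q)) / fact (n - q)) *
        (kernel_permanent ip (replicate (n - p) h @ xs) (replicate (n - q) h @ ys) / fact n)"
      using True by (simp add: tu exp_cre_comp_single fin_ip_def sym_ip_eq_kernel_permanent p_def q_def)
    also have "\<dots> = cnj c * d *
        (complex_of_real (sqrt (fact n / fact p)) * complex_of_real (sqrt (fact n / fact q)) / fact n) *
        (kernel_permanent ip (replicate (n - p) h @ xs) (replicate (n - q) h @ ys) /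
          (fact (n - p) * fact (n - q)))"
      by (simp add: field_simps)
    also have "\<dots> = cnj c * d / (sqrt_fact p * sqrt_fact q) * padded_per ip (riesz ip h) (ip h h) n xs ys"
      using True by (simp add: creation_constant kernel padded_per_def flip: p_def q_def)
    finally show ?thesis
      by (simp add: tu p_def q_def)
  next
    case False
    then show ?thesis
      by (auto simp: tu exp_cre_comp_single padded_per_def p_def q_def)
  qed
qed

lemma exp_cre_ip_eq_matching_form:
  assumes "\<forall>x y. ip y x = cnj (ip x y)"
  shows "exp_cre_ip ip h \<Psi> \<Phi> = exp (ip h h) * matching_form ip (riesz ip h) \<Psi> \<Phi>"
proof -
  have "fin_ip ip (exp_cre_comp h n \<Psi>) (exp_cre_comp h n \<Phi>) =
      (\<Sum>t\<in>#\<Psi>. \<Sum>u\<in>#\<Phi>. cnj (fst t) * fst u / (sqrt_fact (length (snd t)) * sqrt_fact (length (snd u))) *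
        padded_per ip (riesz ip h) (ip h h) n (snd t) (snd u))" for n
    unfolding exp_cre_comp_sum_mset[of h n \<Psi>] fin_ip_sum_mset_left
    unfolding exp_cre_comp_sum_mset[of h n \<Phi>] fin_ip_sum_mset_right
      fin_ip_exp_cre_comp_single[OF assms] ..
  then have "(\<lambda>n. fin_ip ip (exp_cre_comp h n \<Psi>) (exp_cre_comp h n \<Phi>)) sums
      (\<Sum>t\<in>#\<Psi>. \<Sum>u\<in>#\<Phi>. cnj (fst t) * fst u / (sqrt_fact (length (snd t)) * sqrt_fact (length (snd u))) *
        (exp (ip h h) * matching_poly ip (riesz ip h) (snd t) (snd u)))"
    by (simp only:) (intro sums_sum_mset sums_mult padded_per_sums)
  then show ?thesis
    unfolding exp_cre_ip_def matching_form_def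
    by (simp add: sums_iff sum_mset_distrib_left mult_ac)
qed

section \<open>Continuity in the functional\<close>

lemma matching_poly_tendsto:
  assumes "\<forall>f\<in>T. ((\<lambda>\<alpha>. pair (G \<alpha>) f) \<longlongrightarrow> pair g f) F"
    and "set xs \<subseteq> T" "set ys \<subseteq> T"
  shows "((\<lambda>\<alpha>. matching_poly ip (G \<alpha>) xs ys) \<longlongrightarrow> matching_poly ip g xs ys) F"
  using assms(2,3)
proof (induction xs arbitrary: ys)
  case Nil
  have "ys ! i \<in> T" if "i < length ys" for i
    using Nil that nth_mem by blast
  then have "((\<lambda>\<alpha>. \<Prod>i<length ys. pair (G \<alpha>) (ys ! i)) \<longlongrightarrow> (\<Prod>i<length ys. pair g (ys ! i))) F"
    using assms(1) by (intro tendsto_prod) simp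
  then show ?case
    by (simp add: prod.list_conv_set_nth atLeast0LessThan)
next
  case (Cons x xs)
  have pair_x: "((\<lambda>\<alpha>. pair (G \<alpha>) x) \<longlongrightarrow> pair g x) F"
    using assms(1) Cons.prems by simp
  have rest: "((\<lambda>\<alpha>. matching_poly ip (G \<alpha>) xs zs) \<longlongrightarrow> matching_poly ip g xs zs) F"
    if "set zs \<subseteq> set ys" for zs
    using Cons.IH Cons.prems that by auto
  show ?case
    unfolding matching_poly.simps
    by (intro tendsto_intros pair_x rest order.refl set_remove_nth_subset)
qed

lemma matching_form_tendsto:
  assumes "\<forall>f\<in>T. ((\<lambda>\<alpha>. pair (G \<alpha>) f) \<longlongrightarrow> pair g f) F"
    and "in_Ffin T \<Psi>" "in_Ffin T \<Phi>"
  shows "((\<lambda>\<alpha>. matching_form ip (G \<alpha>) \<Psi> \<Phi>) \<longlongrightarrow> matching_form ip g \<Psi> \<Phi>) F"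
  unfolding matching_form_def
  using assms by (intro tendsto_sum_mset tendsto_mult tendsto_const matching_poly_tendsto)
    (auto simp: in_Ffin_def)

theorem proposition2p12:
  fixes scal :: "complex \<Rightarrow> 'h::ab_group_add \<Rightarrow> 'h"
    and ip :: "'h \<Rightarrow> 'h \<Rightarrow> complex"
    and T :: "'h set" and tau :: "'h topology"
    and g :: "'h \<Rightarrow> complex"
    and \<Psi> \<Phi> :: "'h fvec"
    and G :: "'i \<Rightarrow> 'h" and F :: "'i filter"
  assumes "complex_hilbert_space scal ip"
    and "dense_cont_embedded scal ip T tau"
    and "g \<in> antidual scal T tau"
    and "in_Ffin T \<Psi>" and "in_Ffin T \<Phi>"
    and "\<forall>f\<in>T. ((\<lambda>\<alpha>. ip (G \<alpha>) f) \<longlongrightarrow> pair g f) F"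
  shows "((\<lambda>\<alpha>. exp_cre_ip ip (G \<alpha>) \<Psi> \<Phi> / exp_cre_ip ip (G \<alpha>) vac vac)
           \<longlongrightarrow> g_ip ip g \<Psi> \<Phi>) F"
proof -
  have hermitian: "\<forall>x y. ip y x = cnj (ip x y)"
    using assms(1) unfolding complex_hilbert_space_def by blast
  have "exp_cre_ip ip (G \<alpha>) \<Psi> \<Phi> / exp_cre_ip ip (G \<alpha>) vac vac = matching_form ip (riesz ip (G \<alpha>)) \<Psi> \<Phi>"
    for \<alpha>
    by (simp add: exp_cre_ip_eq_matching_form[OF hermitian])
  moreover have "((\<lambda>\<alpha>. matching_form ip (riesz ip (G \<alpha>)) \<Psi> \<Phi>) \<longlongrightarrow> matching_form ip g \<Psi> \<Phi>) F"
    using assms(4-6) by (intro matching_form_tendsto[where T = T]) simp_all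
  ultimately show ?thesis
    by (simp add: g_ip_eq_matching_form)
qed

end
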